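(* Let $d,D\in\mathbb{N}_+$, $L\ge0$, and let $f=(f_1,\dots,f_D):\mathbb{R}^d\to\mathbb{R}^D$ be $L$-Lipschitz. There is a constant $C>0$ such that for every $n\in\mathbb{N}_+$ and each $i\in\{1,\dots,D\}$ there exist ReLU MLP vector fields $\Phi_i:\mathbb{R}^{d+1}\to\mathbb{R}^{d+1}$, with associated ReLU neural ODEs $\Psi_i=\mathrm{Flow}(\Phi_i):\mathbb{R}^{d+1}\to\mathbb{R}^{d+1}$, such that the map $\Psi:\mathbb{R}^d\to\mathbb{R}^D$, $\Psi(x)=\big(\pi\circ\Psi_1\circ\iota(x),\dots,\pi\circ\Psi_D\circ\iota(x)\big)$, satisfies $$\max_{1\le j\le D}\ \sup_{x\in[0,1]^d}|f_j(x)-\Psi_j(x)|\le \frac{C}{n}.$$ Moreover $\Psi$ is Lipschitz, and each $\Phi_i$ has width $\mathcal{O}(d\,n^{d+1})$, depth $\mathcal{O}(\log_2 d)$, and $\mathcal{O}(d\,n^{d+1})$ non-zero parameters.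
   Context: $\iota:\mathbb{R}^d\to\mathbb{R}^{d+1}$ is the linear embedding $x\mapsto(x,0)$ and $\pi:\mathbb{R}^{d+1}\to\mathbb{R}$ is the projection onto the last coordinate, $(x,y)\mapsto y$. A ReLU MLP is a map $\Phi(z)=W^{(\Delta)}z^{(\Delta)}+b^{(\Delta)}$, $z^{(l+1)}=\max(0,W^{(l)}z^{(l)}+b^{(l)})$ (componentwise), $z^{(1)}=z$. For a Lipschitz vector field $V$ on $\mathbb{R}^{d+1}$, $\mathrm{Flow}(V)$ is the time-$1$ map $z\mapsto z_1^z$ of $\dot z_t=V(z_t)$, $z_0=z$. The constant $C$ and the implicit constants in $\mathcal{O}$ are independent of $n$. *)

theory Defs
  imports "HOL-Analysis.Analysis"
begin

text \<open>A fixed enumeration of the (orthonormal) basis of a Euclidean space, used to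
  identify a Euclidean space of dimension k with coordinate vectors in R^k.\<close>
definition basis_enum :: "nat \<Rightarrow> 'v::euclidean_space" where
  "basis_enum = (SOME e. bij_betw e {..<DIM('v)} Basis)"

definition to_coords :: "'v::euclidean_space \<Rightarrow> (nat \<Rightarrow> real)" where
  "to_coords z = (\<lambda>j. if j < DIM('v) then z \<bullet> basis_enum j else 0)"

definition from_coords :: "(nat \<Rightarrow> real) \<Rightarrow> 'v::euclidean_space" where
  "from_coords v = (\<Sum>j<DIM('v). v j *\<^sub>R basis_enum j)"

text \<open>One affine layer: weights W (row i, column j) and bias b, input dimension N.\<close>
type_synonym layer = "(nat \<Rightarrow> nat \<Rightarrow> real) \<times> (nat \<Rightarrow> real)"

definition affine :: "nat \<Rightarrow> layer \<Rightarrow> (nat \<Rightarrow> real) \<Rightarrow> (nat \<Rightarrow> real)" where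
  "affine N Lay z = (\<lambda>i. (\<Sum>j<N. fst Lay i j * z j) + snd Lay i)"

definition relu :: "(nat \<Rightarrow> real) \<Rightarrow> (nat \<Rightarrow> real)" where
  "relu z = (\<lambda>i. max 0 (z i))"

text \<open>Evaluation: dims = [N_1, ..., N_{Delta+1}] (layer dimensions), layers = affine maps
  W^(1),...,W^(Delta); ReLU after every affine map except the last.\<close>
fun mlp_eval :: "nat list \<Rightarrow> layer list \<Rightarrow> (nat \<Rightarrow> real) \<Rightarrow> (nat \<Rightarrow> real)" where
  "mlp_eval (N # Ns) [Lay] z = affine N Lay z"
| "mlp_eval (N # Ns) (Lay # Lay' # Lays) z = mlp_eval Ns (Lay' # Lays) (relu (affine N Lay z))"
| "mlp_eval _ _ z = z"

definition relu_mlp_arch :: "'v::euclidean_space itself \<Rightarrow> nat list \<Rightarrow> layer list \<Rightarrow> bool" where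
  "relu_mlp_arch _ dims layers \<longleftrightarrow> layers \<noteq> [] \<and> length dims = length layers + 1
     \<and> hd dims = DIM('v) \<and> last dims = DIM('v)"

definition mlp_fun :: "nat list \<Rightarrow> layer list \<Rightarrow> 'v::euclidean_space \<Rightarrow> 'v" where
  "mlp_fun dims layers z = from_coords (mlp_eval dims layers (to_coords z))"

definition mlp_width :: "nat list \<Rightarrow> nat" where
  "mlp_width dims = Max (set dims)"

definition mlp_depth :: "layer list \<Rightarrow> nat" where
  "mlp_depth layers = length layers"

definition mlp_nnz :: "nat list \<Rightarrow> layer list \<Rightarrow> nat" where
  "mlp_nnz dims layers = (\<Sum>l<length layers.
      card {(i, j). i < dims ! (l+1) \<and> j < dims ! l \<and> fst (layers ! l) i j \<noteq> 0}
    + card {i. i < dims ! (l+1) \<and> snd (layers ! l) i \<noteq> 0})"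

text \<open>Time-1 flow map of the ODE z' = V(z), z(0) = z (well-defined for Lipschitz V).\<close>
definition flow :: "('v::real_normed_vector \<Rightarrow> 'v) \<Rightarrow> 'v \<Rightarrow> 'v" where
  "flow V z = (THE y. \<exists>\<gamma>. \<gamma> 0 = z \<and>
      (\<forall>t\<in>{0..1}. (\<gamma> has_vector_derivative V (\<gamma> t)) (at t within {0..1})) \<and> \<gamma> 1 = y)"

definition iota :: "'a \<Rightarrow> 'a \<times> real" where "iota x = (x, 0)"
definition proj_last :: "'a \<times> real \<Rightarrow> real" where "proj_last z = snd z"

definition unit_cube :: "(real^'n) set" where
  "unit_cube = {x. \<forall>i. 0 \<le> x $ i \<and> x $ i \<le> 1}"

end

theory Submission
  imports Defs
begin

text \<open>Each component \<open>f\<^sub>j\<close> is approximated on \<open>[0,1]\<^sup>d\<close> by the upper envelope of the cones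
  \<open>A + f\<^sub>j(p) - L |x - p|\<^sub>1\<close> over the grid points \<open>p \<in> {0, 1/n, \<dots>, 1}\<^sup>d\<close>, where the shift
  \<open>A\<close> makes all cone heights large: every cone lies below \<open>A + f\<^sub>j\<close> by the Lipschitz bound,
  and the cone of the nearest grid point comes within \<open>2 L d / n\<close> of it.
  To compute this envelope with a depth independent of \<open>n\<close>, the cones are truncated to bumps
  supported in \<open>\<ell>\<^sub>1\<close>-balls of radius \<open>2 d / n\<close> and the grid points are grouped by their residues
  modulo \<open>4 d\<close>. Bumps of one class have disjoint supports, so each class is summed in a single
  layer, and only the maximum over the \<open>(4 d)\<^sup>d\<close> classes needs a chain of layers.
  The resulting ReLU network \<open>G\<^sub>j\<close> is used as the vertical vector field \<open>(x, y) \<mapsto> (0, G\<^sub>j x)\<close>,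
  whose time-1 flow maps \<open>(x, 0)\<close> to \<open>(x, G\<^sub>j x)\<close>; like every ReLU network, \<open>G\<^sub>j\<close> is Lipschitz.\<close>

section \<open>ReLU networks\<close>

definition set_enum :: "'a set \<Rightarrow> nat \<Rightarrow> 'a" where
  "set_enum S = (SOME e. bij_betw e {..<card S} S)"

lemma bij_betw_set_enum:
  assumes "finite S"
  shows "bij_betw (set_enum S) {..<card S} S"
proof -
  have "\<exists>e. bij_betw e {..<card S} S"
    using ex_bij_betw_nat_finite[OF assms] by (simp add: atLeast0LessThan)
  then show ?thesis
    unfolding set_enum_def by (rule someI_ex)
qed

lemma bij_betw_basis_enum: "bij_betw (basis_enum :: nat \<Rightarrow> 'v::euclidean_space) {..<DIM('v)} Basis"
  using bij_betw_set_enum[of "Basis :: 'v set"] by (simp add: basis_enum_def set_enum_def)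

definition indexed_layer :: "(nat \<Rightarrow> 'b) \<Rightarrow> (nat \<Rightarrow> 'a) \<Rightarrow> ('b \<Rightarrow> 'a \<Rightarrow> real) \<Rightarrow> ('b \<Rightarrow> real) \<Rightarrow> layer" where
  "indexed_layer eT eS W b = ((\<lambda>i j. W (eT i) (eS j)), (\<lambda>i. b (eT i)))"

lemma affine_indexed_layer:
  assumes "bij_betw eS {..<N} S" and "\<And>j. j < N \<Longrightarrow> z j = v (eS j)"
  shows "affine N (indexed_layer eT eS W b) z i = (\<Sum>s\<in>S. W (eT i) s * v s) + b (eT i)"
proof -
  have "(\<Sum>j<N. W (eT i) (eS j) * z j) = (\<Sum>j<N. W (eT i) (eS j) * v (eS j))"
    using assms(2) by simp
  also have "\<dots> = (\<Sum>s\<in>S. W (eT i) s * v s)"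
    using sum.reindex_bij_betw[OF assms(1)] .
  finally show ?thesis
    unfolding affine_def indexed_layer_def by simp
qed

lemma mlp_eval_Cons:
  "Lays \<noteq> [] \<Longrightarrow> mlp_eval (N # Ns) (Lay # Lays) z = mlp_eval Ns Lays (relu (affine N Lay z))"
  by (cases Lays) auto

lemma mlp_nnz_le: "mlp_nnz dims layers \<le> (\<Sum>l<length layers. dims ! (l+1) * (dims ! l + 1))"
  unfolding mlp_nnz_def
proof (rule sum_mono)
  fix l
  let ?W = "{(i, j). i < dims ! (l+1) \<and> j < dims ! l \<and> fst (layers ! l) i j \<noteq> 0}"
  let ?b = "{i. i < dims ! (l+1) \<and> snd (layers ! l) i \<noteq> 0}"
  have "card ?W \<le> card ({..<dims ! (l+1)} \<times> {..<dims ! l})"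
    by (rule card_mono) auto
  moreover have "card ?b \<le> card {..<dims ! (l+1)}"
    by (rule card_mono) auto
  ultimately show "card ?W + card ?b \<le> dims ! (l+1) * (dims ! l + 1)"
    by (simp add: card_cartesian_product algebra_simps)
qed

lemma sum_lessThan_of_bool_mult: "(\<Sum>j<N. of_bool (j = a) * (w j :: real)) = (if a < (N::nat) then w a else 0)"
proof -
  have "{..<N} \<inter> {a} = (if a < N then {a} else {})"
    by auto
  then show ?thesis
    by simp
qed

text \<open>A hidden state \<open>w\<close> of width \<open>N + 2\<close> stores a running maximum \<open>M\<close> of \<open>S 0, \<dots>, S c\<close> as
  \<open>w 0 + w 1\<close>; the next layer outputs \<open>max 0 M = M\<close> and \<open>max 0 (S (c + 1) - M)\<close>, whose sum is
  \<open>max M (S (c + 1))\<close>, while the slots \<open>j + 2\<close> carry \<open>S j\<close> along unchanged.\<close>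

definition running_max :: "nat \<Rightarrow> (nat \<Rightarrow> real) \<Rightarrow> nat \<Rightarrow> (nat \<Rightarrow> real) \<Rightarrow> bool" where
  "running_max N S c w \<longleftrightarrow>
     0 \<le> w 0 \<and> 0 \<le> w 1 \<and> w 0 + w 1 = Max (S ` {..c}) \<and> (\<forall>j<N. w (j + 2) = S j)"

definition max_layer :: "nat \<Rightarrow> layer" where
  "max_layer c =
     ((\<lambda>i j. if i = 0 then of_bool (j = 0) + of_bool (j = 1)
            else if i = 1 then of_bool (j = c + 2) - of_bool (j = 0) - of_bool (j = 1)
            else of_bool (j = i)),
      (\<lambda>_. 0))"

lemma affine_max_layer:
  assumes "c + 2 < K"
  shows "affine K (max_layer c) w i =
    (if i = 0 then w 0 + w 1 else if i = 1 then w (c + 2) - (w 0 + w 1) else if i < K then w i else 0)"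
  using assms
  by (simp add: affine_def max_layer_def distrib_right left_diff_distrib sum.distrib
        sum_subtractf sum_lessThan_of_bool_mult del: of_bool_eq)

lemma running_max_step:
  assumes "running_max N S c w" and "c + 1 < N" and "\<And>j. 0 \<le> S j"
  shows "running_max N S (c + 1) (relu (affine (N + 2) (max_layer (c + 1)) w))"
proof -
  let ?a = "affine (N + 2) (max_layer (c + 1)) w"
  have a: "?a 0 = w 0 + w 1" "?a 1 = w (c + 1 + 2) - (w 0 + w 1)" "?a (j + 2) = w (j + 2)" if "j < N" for j
    using assms(2) that by (simp_all add: affine_max_layer)
  have "0 \<le> Max (S ` {..c})"
    using assms(3) by (simp add: Max_ge_iff) blast
  moreover have "Max (S ` {..c + 1}) = max (Max (S ` {..c})) (S (c + 1))"
    by (simp add: atMost_Suc max.commute)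
  ultimately show ?thesis
    using assms(1,2,3) a by (auto simp: running_max_def relu_def max_def)
qed

lemma mlp_eval_max_layers:
  assumes "running_max N S c w" and "c + k + 1 = N" and "\<And>j. 0 \<le> S j"
  shows "\<exists>w'. running_max N S (N - 1) w'
    \<and> mlp_eval (replicate (k + 1) (N + 2) @ [M]) (map max_layer [c + 1..<N] @ [Lay]) w
      = affine (N + 2) Lay w'"
  using assms(1,2)
proof (induction k arbitrary: c w)
  case 0
  then show ?case
    by auto
next
  case (Suc k)
  have "[c + 1..<N] = (c + 1) # [c + 2..<N]"
    using Suc.prems(2) by (simp add: upt_conv_Cons)
  then have "mlp_eval (replicate (Suc k + 1) (N + 2) @ [M]) (map max_layer [c + 1..<N] @ [Lay]) w
      = mlp_eval (replicate (k + 1) (N + 2) @ [M]) (map max_layer [c + 1 + 1..<N] @ [Lay])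
          (relu (affine (N + 2) (max_layer (c + 1)) w))"
    by (simp add: mlp_eval_Cons)
  then show ?case
    using Suc.IH[OF running_max_step[OF Suc.prems(1) _ assms(3)]] Suc.prems(2) by simp
qed

definition readout_layer :: "'v::euclidean_space \<Rightarrow> real \<Rightarrow> layer" where
  "readout_layer e A =
     ((\<lambda>i j. if basis_enum i = e then of_bool (j = 0) + of_bool (j = 1) else 0),
      (\<lambda>i. if basis_enum i = e then - A else 0))"

lemma affine_readout_layer:
  "2 \<le> K \<Longrightarrow> affine K (readout_layer e A) w i = (if basis_enum i = e then w 0 + w 1 - A else 0)"
  by (simp add: affine_def readout_layer_def distrib_right sum.distrib sum_lessThan_of_bool_mult del: of_bool_eq)

lemma from_coords_basis_enum_eq:
  assumes "e \<in> (Basis :: 'v::euclidean_space set)"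
  shows "(from_coords (\<lambda>i. if basis_enum i = e then c else 0) :: 'v) = c *\<^sub>R e"
proof -
  have "(from_coords (\<lambda>i. if basis_enum i = e then c else 0) :: 'v)
      = (\<Sum>j<DIM('v). (\<lambda>b. (if b = e then c else 0) *\<^sub>R b) (basis_enum j))"
    unfolding from_coords_def by simp
  also have "\<dots> = (\<Sum>b\<in>Basis. (if b = e then c else 0) *\<^sub>R b)"
    by (rule sum.reindex_bij_betw[OF bij_betw_basis_enum])
  also have "\<dots> = c *\<^sub>R e"
    using assms by (simp add: if_distrib[of "\<lambda>t. t *\<^sub>R _"] cong: if_cong)
  finally show ?thesis .
qed

section \<open>Lipschitz continuity of ReLU networks\<close>

lemma relu_dist_le: "\<bar>relu z i - relu z' i\<bar> \<le> \<bar>z i - z' i\<bar>"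
  by (auto simp: relu_def max_def abs_if)

lemma affine_dist_le:
  "\<bar>affine N Lay z i - affine N Lay z' i\<bar> \<le> (\<Sum>j<N. \<bar>fst Lay i j\<bar>) * (\<Sum>j<N. \<bar>z j - z' j\<bar>)"
proof -
  have "\<bar>affine N Lay z i - affine N Lay z' i\<bar> = \<bar>\<Sum>j<N. fst Lay i j * (z j - z' j)\<bar>"
    by (simp add: affine_def algebra_simps sum_subtractf)
  also have "\<dots> \<le> (\<Sum>j<N. \<bar>fst Lay i j\<bar> * \<bar>z j - z' j\<bar>)"
    by (rule order_trans[OF sum_abs]) (simp add: abs_mult)
  also have "\<dots> \<le> (\<Sum>j<N. \<bar>fst Lay i j\<bar> * (\<Sum>k<N. \<bar>z k - z' k\<bar>))"
    by (intro sum_mono mult_left_mono member_le_sum) auto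
  finally show ?thesis
    by (simp add: sum_distrib_right)
qed

lemma mlp_eval_lipschitz:
  assumes "layers \<noteq> []" and "length dims = length layers + 1"
  shows "\<exists>K\<ge>0. \<forall>z z'. \<bar>mlp_eval dims layers z i - mlp_eval dims layers z' i\<bar>
           \<le> K * (\<Sum>j<hd dims. \<bar>z j - z' j\<bar>)"
  using assms
proof (induction layers arbitrary: dims i rule: induct_list012)
  case (2 Lay)
  then obtain N Ns where "dims = N # Ns"
    by (cases dims) auto
  then show ?case
    by (intro exI[of _ "\<Sum>j<N. \<bar>fst Lay i j\<bar>"]) (auto intro: affine_dist_le)
next
  case (3 Lay Lay' Lays)
  then obtain N Ns where dims: "dims = N # Ns" and "length Ns = length (Lay' # Lays) + 1"
    by (cases dims) auto
  then obtain K where "K \<ge> 0" and K: "\<And>u u'. \<bar>mlp_eval Ns (Lay' # Lays) u i - mlp_eval Ns (Lay' # Lays) u' i\<bar>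
      \<le> K * (\<Sum>j<hd Ns. \<bar>u j - u' j\<bar>)"
    using "3.IH"(2) by blast
  define c where "c j = (\<Sum>k<N. \<bar>fst Lay j k\<bar>)" for j
  show ?case
  proof (intro exI[of _ "K * (\<Sum>j<hd Ns. c j)"] conjI allI)
    show "K * (\<Sum>j<hd Ns. c j) \<ge> 0"
      using \<open>K \<ge> 0\<close> by (simp add: c_def sum_nonneg)
    fix z z'
    have "(\<Sum>j<hd Ns. \<bar>relu (affine N Lay z) j - relu (affine N Lay z') j\<bar>)
        \<le> (\<Sum>j<hd Ns. c j * (\<Sum>k<N. \<bar>z k - z' k\<bar>))"
      unfolding c_def by (intro sum_mono order_trans[OF relu_dist_le affine_dist_le])
    then show "\<bar>mlp_eval dims (Lay # Lay' # Lays) z i - mlp_eval dims (Lay # Lay' # Lays) z' i\<bar>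
        \<le> K * (\<Sum>j<hd Ns. c j) * (\<Sum>j<hd dims. \<bar>z j - z' j\<bar>)"
      using K[of "relu (affine N Lay z)" "relu (affine N Lay z')"] \<open>K \<ge> 0\<close> dims
      by (simp add: sum_distrib_right[symmetric] mult.assoc order_trans[OF _ mult_left_mono])
  qed
qed simp

lemma norm_from_coords_diff_le:
  "norm (from_coords v - from_coords v' :: 'v::euclidean_space) \<le> (\<Sum>j<DIM('v). \<bar>v j - v' j\<bar>)"
proof -
  have "norm (from_coords v - from_coords v' :: 'v) = norm (\<Sum>j<DIM('v). (v j - v' j) *\<^sub>R (basis_enum j :: 'v))"
    by (simp add: from_coords_def scaleR_diff_left sum_subtractf)
  also have "\<dots> \<le> (\<Sum>j<DIM('v). norm ((v j - v' j) *\<^sub>R (basis_enum j :: 'v)))"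
    by (rule norm_sum)
  also have "\<dots> = (\<Sum>j<DIM('v). \<bar>v j - v' j\<bar>)"
    using bij_betw_apply[OF bij_betw_basis_enum[where 'v='v]] by (intro sum.cong) auto
  finally show ?thesis .
qed

lemma to_coords_dist_le: "\<bar>to_coords z j - to_coords z' j\<bar> \<le> dist z z'"
  using Basis_le_norm[OF bij_betw_apply[OF bij_betw_basis_enum], of _ "z - z'"]
  by (simp add: to_coords_def dist_norm inner_diff_left)

lemma mlp_fun_lipschitz:
  assumes "relu_mlp_arch TYPE('v::euclidean_space) dims layers"
  shows "\<exists>K. K-lipschitz_on UNIV (mlp_fun dims layers :: 'v \<Rightarrow> 'v)"
proof -
  have "\<forall>i. \<exists>K\<ge>0. \<forall>z z'. \<bar>mlp_eval dims layers z i - mlp_eval dims layers z' i\<bar>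
      \<le> K * (\<Sum>j<DIM('v). \<bar>z j - z' j\<bar>)"
    using mlp_eval_lipschitz[of layers dims] assms by (simp add: relu_mlp_arch_def)
  then obtain K where K0: "\<And>i. K i \<ge> 0" and K: "\<And>i z z'. \<bar>mlp_eval dims layers z i - mlp_eval dims layers z' i\<bar>
      \<le> K i * (\<Sum>j<DIM('v). \<bar>z j - z' j\<bar>)"
    unfolding choice_iff by blast
  have "(DIM('v) * (\<Sum>i<DIM('v). K i))-lipschitz_on UNIV (mlp_fun dims layers :: 'v \<Rightarrow> 'v)"
  proof (rule lipschitz_onI)
    fix z z' :: 'v
    have "dist (mlp_fun dims layers z) (mlp_fun dims layers z')
        \<le> (\<Sum>i<DIM('v). \<bar>mlp_eval dims layers (to_coords z) i - mlp_eval dims layers (to_coords z') i\<bar>)"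
      unfolding mlp_fun_def dist_norm by (rule norm_from_coords_diff_le)
    also have "\<dots> \<le> (\<Sum>i<DIM('v). K i * (\<Sum>j<DIM('v). \<bar>to_coords z j - to_coords z' j\<bar>))"
      by (intro sum_mono K)
    also have "\<dots> \<le> (\<Sum>i<DIM('v). K i * (\<Sum>j<DIM('v). dist z z'))"
      by (intro sum_mono mult_left_mono K0 to_coords_dist_le)
    finally show "dist (mlp_fun dims layers z) (mlp_fun dims layers z') \<le> DIM('v) * (\<Sum>i<DIM('v). K i) * dist z z'"
      by (simp add: sum_distrib_right[symmetric] mult_ac)
  qed (simp add: sum_nonneg K0)
  then show ?thesis ..
qed

lemma lipschitz_on_component:
  fixes f :: "'a::metric_space \<Rightarrow> real^'m"
  assumes "L-lipschitz_on S f"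
  shows "L-lipschitz_on S (\<lambda>x. f x $ j)"
proof (rule lipschitz_onI)
  fix x y
  assume "x \<in> S" "y \<in> S"
  have "dist (f x $ j) (f y $ j) \<le> dist (f x) (f y)"
    using component_le_norm_cart[of "f x - f y" j] by (simp add: dist_norm dist_real_def)
  also have "\<dots> \<le> L * dist x y"
    using lipschitz_onD[OF assms \<open>x \<in> S\<close> \<open>y \<in> S\<close>] .
  finally show "dist (f x $ j) (f y $ j) \<le> L * dist x y" .
qed (rule lipschitz_on_nonneg[OF assms])

lemma lipschitz_on_vec:
  fixes g :: "'m::finite \<Rightarrow> 'a::metric_space \<Rightarrow> real"
  assumes "\<And>i. \<exists>K. K-lipschitz_on S (g i)"
  shows "\<exists>K. K-lipschitz_on S (\<lambda>x. \<chi> i. g i x)"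
proof -
  have "\<forall>i. \<exists>K. K-lipschitz_on S (g i)"
    using assms by blast
  then obtain K where K: "\<And>i. (K i)-lipschitz_on S (g i)"
    unfolding choice_iff by blast
  have "(\<Sum>i\<in>UNIV. K i)-lipschitz_on S (\<lambda>x. \<chi> i. g i x)"
  proof (rule lipschitz_onI)
    fix x y
    assume "x \<in> S" "y \<in> S"
    have "dist (\<chi> i. g i x) (\<chi> i. g i y) \<le> (\<Sum>i\<in>UNIV. \<bar>g i x - g i y\<bar>)"
      using norm_le_l1_cart[of "(\<chi> i. g i x) - (\<chi> i. g i y)"] by (simp add: dist_norm)
    also have "\<dots> \<le> (\<Sum>i\<in>UNIV. K i * dist x y)"
      using lipschitz_onD[OF K \<open>x \<in> S\<close> \<open>y \<in> S\<close>] by (intro sum_mono) (simp add: dist_real_def)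
    finally show "dist (\<chi> i. g i x) (\<chi> i. g i y) \<le> (\<Sum>i\<in>UNIV. K i) * dist x y"
      by (simp add: sum_distrib_right)
  qed (simp add: sum_nonneg lipschitz_on_nonneg[OF K])
  then show ?thesis ..
qed

section \<open>The flow of a vertical vector field\<close>

lemma vertical_field_solution_endpoint:
  fixes G :: "'a::real_normed_vector \<Rightarrow> real"
  assumes "\<gamma> 0 = (x, y)"
    and "\<forall>t\<in>{0..1}. (\<gamma> has_vector_derivative (0, G (fst (\<gamma> t)))) (at t within {0..1})"
  shows "\<gamma> 1 = (x, y + G x)"
proof -
  have \<gamma>': "(\<gamma> has_derivative (\<lambda>h. h *\<^sub>R (0, G (fst (\<gamma> t))))) (at t within {0..1})" if "t \<in> {0..1}" for t
    using assms(2) that by (simp add: has_vector_derivative_def)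
  obtain c where "\<And>t. t \<in> {0..1} \<Longrightarrow> fst (\<gamma> t) = c"
    using has_vector_derivative_zero_constant[of "{0..1}" "\<lambda>t. fst (\<gamma> t)"]
      has_derivative_fst[OF \<gamma>'] by (auto simp: has_vector_derivative_def)
  then have fst_\<gamma>: "fst (\<gamma> t) = x" if "t \<in> {0..1}" for t
    using that assms(1) by force
  have "((\<lambda>t. snd (\<gamma> t) - t * G x) has_vector_derivative 0) (at t within {0..1})" if "t \<in> {0..1}" for t
  proof -
    have "((\<lambda>t. snd (\<gamma> t)) has_vector_derivative G x) (at t within {0..1})"
      using has_derivative_snd[OF \<gamma>'[OF that]] fst_\<gamma>[OF that]
      by (simp add: has_vector_derivative_def mult.commute)
    moreover have "((\<lambda>t. t * G x) has_vector_derivative G x) (at t within {0..1})"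
      by (auto intro!: derivative_eq_intros)
    ultimately have "((\<lambda>t. snd (\<gamma> t) - t * G x) has_vector_derivative G x - G x) (at t within {0..1})"
      by (rule has_vector_derivative_diff)
    then show ?thesis
      by simp
  qed
  then obtain e where e: "\<And>t. t \<in> {0..1} \<Longrightarrow> snd (\<gamma> t) - t * G x = e"
    using has_vector_derivative_zero_constant[of "{0..1::real}" "\<lambda>t. snd (\<gamma> t) - t * G x"] by auto
  have "snd (\<gamma> 1) - G x = snd (\<gamma> 0)"
    using e[of 1] e[of 0] by simp
  then show ?thesis
    using fst_\<gamma>[of 1] assms(1) by (simp add: prod_eq_iff)
qed

lemma flow_vertical_field:
  fixes G :: "'a::real_normed_vector \<Rightarrow> real"
  shows "flow (\<lambda>z. (0, G (fst z))) (x, y) = (x, y + G x)"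
  unfolding flow_def
proof (rule the_equality)
  show "\<exists>\<gamma>. \<gamma> 0 = (x, y) \<and> (\<forall>t\<in>{0..1}. (\<gamma> has_vector_derivative (0, G (fst (\<gamma> t)))) (at t within {0..1}))
      \<and> \<gamma> 1 = (x, y + G x)"
    by (intro exI[of _ "\<lambda>t. (x, y + t * G x)"]) (auto intro!: derivative_eq_intros)
qed (auto dest: vertical_field_solution_endpoint)

section \<open>Grids and residue classes\<close>

definition grid :: "nat \<Rightarrow> ('n::finite \<Rightarrow> nat) set" where
  "grid n = PiE UNIV (\<lambda>_. {..n})"

definition grid_point :: "nat \<Rightarrow> ('n::finite \<Rightarrow> nat) \<Rightarrow> real^'n" where
  "grid_point n p = (\<chi> i. real (p i) / real n)"

definition l1_dist :: "real^'n::finite \<Rightarrow> real^'n \<Rightarrow> real" where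
  "l1_dist x y = (\<Sum>i\<in>UNIV. \<bar>x $ i - y $ i\<bar>)"

definition residue_class :: "nat \<Rightarrow> ('n \<Rightarrow> nat) \<Rightarrow> 'n \<Rightarrow> nat" where
  "residue_class m p = (\<lambda>i. p i mod m)"

definition residue_classes :: "nat \<Rightarrow> ('n::finite \<Rightarrow> nat) set" where
  "residue_classes m = PiE UNIV (\<lambda>_. {..<m})"

lemma mem_grid_iff: "p \<in> grid n \<longleftrightarrow> (\<forall>i. p i \<le> n)"
  by (simp add: grid_def PiE_iff)

lemma finite_grid: "finite (grid n)"
  by (simp add: grid_def finite_PiE)

lemma card_grid: "card (grid n :: ('n::finite \<Rightarrow> nat) set) = (n + 1) ^ CARD('n)"
  by (simp add: grid_def card_PiE)

lemma grid_point_in_unit_cube: "p \<in> grid n \<Longrightarrow> grid_point n p \<in> unit_cube"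
  by (auto simp: unit_cube_def grid_point_def mem_grid_iff divide_le_eq_1)

lemma finite_residue_classes: "finite (residue_classes m)"
  by (simp add: residue_classes_def finite_PiE)

lemma card_residue_classes: "card (residue_classes m :: ('n::finite \<Rightarrow> nat) set) = m ^ CARD('n)"
  by (simp add: residue_classes_def card_PiE)

lemma residue_class_in_residue_classes: "0 < m \<Longrightarrow> residue_class m p \<in> residue_classes m"
  by (simp add: residue_class_def residue_classes_def PiE_iff)

lemma l1_dist_nonneg: "0 \<le> l1_dist x y"
  by (simp add: l1_dist_def sum_nonneg)

lemma component_dist_le_l1_dist: "\<bar>x $ i - y $ i\<bar> \<le> l1_dist x y"
  unfolding l1_dist_def by (rule member_le_sum) auto

lemma dist_le_l1_dist: "dist x y \<le> l1_dist x y"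
  using norm_le_l1_cart[of "x - y"] by (simp add: dist_norm l1_dist_def)

lemma lipschitz_on_l1_dist_le:
  "L-lipschitz_on UNIV F \<Longrightarrow> \<bar>F x - F y\<bar> \<le> L * l1_dist x y"
  using lipschitz_onD[of L UNIV F x y] lipschitz_on_nonneg[of L UNIV F]
  by (simp add: dist_real_def order_trans[OF _ mult_left_mono[OF dist_le_l1_dist]])

lemma abs_le_on_unit_cube:
  fixes F :: "real^'n::finite \<Rightarrow> real"
  assumes "L-lipschitz_on UNIV F" and "y \<in> unit_cube"
  shows "\<bar>F y\<bar> \<le> \<bar>F 0\<bar> + L * CARD('n)"
proof -
  have "l1_dist y 0 \<le> (\<Sum>i\<in>(UNIV::'n set). 1)"
    using assms(2) unfolding l1_dist_def unit_cube_def by (intro sum_mono) auto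
  then have "L * l1_dist y 0 \<le> L * CARD('n)"
    using lipschitz_on_nonneg[OF assms(1)] by (simp add: mult_left_mono)
  then show ?thesis
    using lipschitz_on_l1_dist_le[OF assms(1), of y 0] by linarith
qed

lemma le_dist_if_mod_eq:
  fixes a b m :: nat
  assumes "a mod m = b mod m" and "a \<noteq> b"
  shows "real m \<le> \<bar>real a - real b\<bar>"
proof -
  have "real m \<le> real b - real a" if "a mod m = b mod m" "a < b" for a b
  proof -
    have "m dvd b - a"
      using that mod_eq_dvd_iff_nat[of a b m] by simp
    then have "m \<le> b - a"
      using that(2) by (simp add: dvd_imp_le)
    then show ?thesis
      using that(2) by simp
  qed
  then show ?thesis
    using assms by (cases "a < b") (fastforce simp: abs_if)+
qed

lemma l1_dist_sum_ge_if_same_residue_class: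
  assumes "residue_class m p = residue_class m q" and "p \<noteq> q"
  shows "real m / real n \<le> l1_dist x (grid_point n p) + l1_dist x (grid_point n q)"
proof -
  obtain i where "p i \<noteq> q i"
    using assms(2) by auto
  moreover have "p i mod m = q i mod m"
    using assms(1) unfolding residue_class_def by meson
  ultimately have "real m / real n \<le> \<bar>real (p i) - real (q i)\<bar> / real n"
    by (intro divide_right_mono le_dist_if_mod_eq) auto
  also have "\<dots> = \<bar>grid_point n p $ i - grid_point n q $ i\<bar>"
    by (simp add: grid_point_def flip: diff_divide_distrib)
  also have "\<dots> \<le> \<bar>x $ i - grid_point n p $ i\<bar> + \<bar>x $ i - grid_point n q $ i\<bar>"
    by linarith
  also have "\<dots> \<le> l1_dist x (grid_point n p) + l1_dist x (grid_point n q)"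
    by (intro add_mono component_dist_le_l1_dist)
  finally show ?thesis .
qed

lemma exists_grid_point_near:
  fixes x :: "real^'n::finite"
  assumes "0 < n" and "x \<in> unit_cube"
  shows "\<exists>p\<in>grid n. l1_dist x (grid_point n p) \<le> real CARD('n) / real n"
proof
  define p where "p i = nat \<lfloor>real n * x $ i\<rfloor>" for i
  have x: "0 \<le> x $ i" "x $ i \<le> 1" for i
    using assms(2) by (auto simp: unit_cube_def)
  have p: "real (p i) \<le> real n * x $ i" "real n * x $ i < real (p i) + 1" for i
    using x[of i] by (auto simp: p_def)
  have "real (p i) \<le> real n" for i
    using p(1)[of i] mult_left_le[OF x(2)[of i], of "real n"] by simp
  then show "p \<in> grid n"
    by (simp add: mem_grid_iff)
  have "\<bar>x $ i - grid_point n p $ i\<bar> \<le> 1 / real n" for i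
  proof -
    have "x $ i - grid_point n p $ i = (real n * x $ i - real (p i)) / real n"
      using assms(1) by (simp add: grid_point_def field_simps)
    moreover have "0 \<le> real n * x $ i - real (p i)" "real n * x $ i - real (p i) \<le> 1"
      using p[of i] by auto
    ultimately show ?thesis
      by (simp add: divide_right_mono)
  qed
  then have "l1_dist x (grid_point n p) \<le> (\<Sum>i\<in>(UNIV::'n set). 1 / real n)"
    unfolding l1_dist_def by (intro sum_mono)
  then show "l1_dist x (grid_point n p) \<le> real CARD('n) / real n"
    by simp
qed

section \<open>Approximation by truncated cones\<close>

definition bump_coeff :: "real \<Rightarrow> real \<Rightarrow> real \<Rightarrow> nat \<Rightarrow> real" where
  "bump_coeff L \<rho> a k =
     (if k = 0 then - L else if k = 1 then L - (a - L * \<rho>) / \<rho> else (a - L * \<rho>) / \<rho>)"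

text \<open>On \<open>t \<ge> 0\<close>, \<open>bump L \<rho> a\<close> follows the cone \<open>a - L t\<close> up to \<open>t = \<rho>\<close>, decreases linearly to
  \<open>0\<close> at \<open>t = 2\<rho>\<close> and vanishes beyond: a combination of three ReLUs of \<open>t\<close>.\<close>

definition bump :: "real \<Rightarrow> real \<Rightarrow> real \<Rightarrow> real \<Rightarrow> real" where
  "bump L \<rho> a t = a + (\<Sum>k<3. bump_coeff L \<rho> a k * max 0 (t - real k * \<rho>))"

lemma
  fixes L \<rho> a t :: real
  assumes "0 \<le> L" and "0 < \<rho>" and "2 * L * \<rho> \<le> a" and "0 \<le> t"
  shows bump_nonneg: "0 \<le> bump L \<rho> a t"
    and bump_le_cone: "bump L \<rho> a t \<le> max 0 (a - L * t)"
    and bump_eq_cone: "t \<le> \<rho> \<Longrightarrow> bump L \<rho> a t = a - L * t"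
    and bump_support: "bump L \<rho> a t \<noteq> 0 \<Longrightarrow> t < 2 * \<rho>"
proof -
  define \<sigma> where "\<sigma> = (a - L * \<rho>) / \<rho>"
  have \<sigma>: "\<sigma> * \<rho> = a - L * \<rho>" "L \<le> \<sigma>"
    using assms(2,3) by (simp_all add: \<sigma>_def field_simps)
  have bump: "bump L \<rho> a t = a - L * t + (L - \<sigma>) * max 0 (t - \<rho>) + \<sigma> * max 0 (t - 2 * \<rho>)"
    using assms(4) by (simp add: bump_def bump_coeff_def \<sigma>_def numeral_3_eq_3)
  consider "t \<le> \<rho>" | "\<rho> < t" "t \<le> 2 * \<rho>" | "2 * \<rho> < t"
    by linarith
  then have "0 \<le> bump L \<rho> a t \<and> bump L \<rho> a t \<le> max 0 (a - L * t)
      \<and> (t \<le> \<rho> \<longrightarrow> bump L \<rho> a t = a - L * t) \<and> (bump L \<rho> a t \<noteq> 0 \<longrightarrow> t < 2 * \<rho>)"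
  proof cases
    case 1
    moreover have "L * t \<le> L * \<rho>" and "0 \<le> L * \<rho>"
      using 1 assms(1,2) by (simp_all add: mult_left_mono)
    ultimately show ?thesis
      using assms(2,3) \<sigma> bump by auto
  next
    case 2
    then have "bump L \<rho> a t = \<sigma> * (2 * \<rho> - t)"
      using bump \<sigma>(1) by (simp add: algebra_simps)
    moreover have "(L - \<sigma>) * (t - \<rho>) \<le> 0"
      using 2 \<sigma>(2) by (simp add: mult_nonpos_nonneg)
    ultimately show ?thesis
      using 2 bump assms(1) \<sigma>(2) by auto
  next
    case 3
    then have "bump L \<rho> a t = a - L * t + (L - \<sigma>) * (t - \<rho>) + \<sigma> * (t - 2 * \<rho>)"
      using bump assms(2) by simp
    also have "\<dots> = 0"
      using \<sigma>(1) by (simp add: algebra_simps)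
    finally have "bump L \<rho> a t = 0" .
    then show ?thesis
      using 3 assms(2) by auto
  qed
  then show "0 \<le> bump L \<rho> a t" "bump L \<rho> a t \<le> max 0 (a - L * t)"
    "t \<le> \<rho> \<Longrightarrow> bump L \<rho> a t = a - L * t" "bump L \<rho> a t \<noteq> 0 \<Longrightarrow> t < 2 * \<rho>"
    by auto
qed

lemma sum_le_if_single_nonzero:
  fixes g :: "'a \<Rightarrow> real"
  assumes "finite S" and "\<And>p. p \<in> S \<Longrightarrow> 0 \<le> g p \<and> g p \<le> B" and "0 \<le> B"
    and "\<And>p q. p \<in> S \<Longrightarrow> q \<in> S \<Longrightarrow> g p \<noteq> 0 \<Longrightarrow> g q \<noteq> 0 \<Longrightarrow> p = q"
  shows "sum g S \<le> B"
proof (cases "\<exists>p\<in>S. g p \<noteq> 0")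
  case True
  then obtain p where p: "p \<in> S" "g p \<noteq> 0"
    by blast
  have "sum g S = g p + sum g (S - {p})"
    using p(1) assms(1) by (simp add: sum.remove)
  also have "sum g (S - {p}) = 0"
    using assms(4) p by (intro sum.neutral) blast
  finally show ?thesis
    using assms(2) p(1) by simp
qed (use assms(3) in simp)

text \<open>The grid points of one residue class modulo \<open>4 d\<close> are so far apart that at most one
  of their bumps is non-zero at any \<open>x\<close>; the class sum is then a single truncated cone.
  The shift \<open>A\<close> makes all cone heights large enough for the bumps.\<close>

definition class_sum ::
    "(real^'n \<Rightarrow> real) \<Rightarrow> real \<Rightarrow> real \<Rightarrow> nat \<Rightarrow> real^'n \<Rightarrow> ('n::finite \<Rightarrow> nat) \<Rightarrow> real" where
  "class_sum F L A n x r = (\<Sum>p\<in>grid n. if residue_class (4 * CARD('n)) p = r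
     then bump L (CARD('n) / n) (A + F (grid_point n p)) (l1_dist x (grid_point n p)) else 0)"

definition cone_approx :: "(real^'n::finite \<Rightarrow> real) \<Rightarrow> real \<Rightarrow> real \<Rightarrow> nat \<Rightarrow> real^'n \<Rightarrow> real" where
  "cone_approx F L A n x =
     Max ((\<lambda>r. max 0 (class_sum F L A n x r)) ` residue_classes (4 * CARD('n))) - A"

lemma cone_height_ge:
  fixes F :: "real^'n::finite \<Rightarrow> real" and L A :: real
  assumes "0 \<le> L" and "0 < n" and "\<And>y. y \<in> unit_cube \<Longrightarrow> 2 * L * CARD('n) \<le> A + F y"
    and "p \<in> grid n"
  shows "2 * L * (CARD('n) / n) \<le> A + F (grid_point n p)"
proof -
  have "CARD('n) / n \<le> CARD('n)"
    using assms(2) by (simp add: divide_le_eq mult_le_cancel_left1)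
  then show ?thesis
    using mult_left_mono[of _ _ "2 * L"] assms(1) assms(3)[OF grid_point_in_unit_cube[OF assms(4)]]
    by fastforce
qed

lemma class_sum_le:
  fixes F :: "real^'n::finite \<Rightarrow> real" and L A :: real
  assumes "0 \<le> L" and "L-lipschitz_on UNIV F" and "0 < n"
    and "\<And>y. y \<in> unit_cube \<Longrightarrow> 2 * L * CARD('n) \<le> A + F y" and "0 \<le> A + F x"
  shows "class_sum F L A n x r \<le> A + F x"
proof -
  define \<rho> where "\<rho> = real CARD('n) / real n"
  define m where "m = 4 * CARD('n)"
  define T where "T p = l1_dist x (grid_point n p)" for p
  define a where "a p = A + F (grid_point n p)" for p
  define g where "g p = (if residue_class m p = r then bump L \<rho> (a p) (T p) else 0)" for p
  have \<rho>: "0 < \<rho>"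
    using assms(3) by (simp add: \<rho>_def)
  have height: "2 * L * \<rho> \<le> a p" if "p \<in> grid n" for p
    using cone_height_ge[OF assms(1,3,4) that] by (simp add: a_def \<rho>_def)
  have T: "0 \<le> T p" for p
    by (simp add: T_def l1_dist_nonneg)
  note bump = bump_nonneg[OF assms(1) \<rho>(1) height T] bump_le_cone[OF assms(1) \<rho>(1) height T]
    bump_support[OF assms(1) \<rho>(1) height T]
  have bounded: "0 \<le> g p \<and> g p \<le> A + F x" if "p \<in> grid n" for p
  proof -
    have "a p - L * T p \<le> A + F x"
      using lipschitz_on_l1_dist_le[OF assms(2), of "grid_point n p" x]
      by (simp add: a_def T_def l1_dist_def abs_minus_commute)
    then show ?thesis
      using bump(1)[OF that, of p] bump(2)[OF that, of p] assms(5) by (auto simp: g_def)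
  qed
  have single: "p = q" if "p \<in> grid n" "q \<in> grid n" "g p \<noteq> 0" "g q \<noteq> 0" for p q
  proof -
    have "residue_class m p = residue_class m q" and "T p + T q < 4 * \<rho>"
      using that bump(3)[OF that(1), of p] bump(3)[OF that(2), of q] by (auto simp: g_def split: if_splits)
    then show "p = q"
      using l1_dist_sum_ge_if_same_residue_class[of m p q n x] by (auto simp: \<rho>_def m_def T_def)
  qed
  have "class_sum F L A n x r = sum g (grid n)"
    unfolding class_sum_def g_def a_def T_def m_def \<rho>_def ..
  also have "\<dots> \<le> A + F x"
    using sum_le_if_single_nonzero[OF finite_grid bounded assms(5) single] .
  finally show ?thesis .
qed

lemma class_sum_ge:
  fixes F :: "real^'n::finite \<Rightarrow> real" and L A :: real
  assumes "0 \<le> L" and "L-lipschitz_on UNIV F" and "0 < n"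
    and "\<And>y. y \<in> unit_cube \<Longrightarrow> 2 * L * CARD('n) \<le> A + F y"
    and "p \<in> grid n" and "l1_dist x (grid_point n p) \<le> CARD('n) / n"
  shows "A + F x - 2 * L * CARD('n) / n \<le> class_sum F L A n x (residue_class (4 * CARD('n)) p)"
proof -
  define \<rho> where "\<rho> = real CARD('n) / real n"
  define T where "T q = l1_dist x (grid_point n q)" for q
  define a where "a q = A + F (grid_point n q)" for q
  have \<rho>: "0 < \<rho>"
    using assms(3) by (simp add: \<rho>_def)
  have height: "2 * L * \<rho> \<le> a q" if "q \<in> grid n" for q
    using cone_height_ge[OF assms(1,3,4) that] by (simp add: a_def \<rho>_def)
  have T: "0 \<le> T q" for q
    by (simp add: T_def l1_dist_nonneg)
  have "F x - L * T p \<le> F (grid_point n p)"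
    using lipschitz_on_l1_dist_le[OF assms(2), of x "grid_point n p"] by (simp add: T_def)
  moreover have "L * T p \<le> L * \<rho>"
    using mult_left_mono[OF assms(6,1)] by (simp add: T_def \<rho>_def)
  ultimately have "A + F x - 2 * L * \<rho> \<le> a p - L * T p"
    by (simp add: a_def)
  also have "\<dots> = bump L \<rho> (a p) (T p)"
    using bump_eq_cone[OF assms(1) \<rho> height[OF assms(5)] T] assms(6) by (simp add: T_def \<rho>_def)
  also have "\<dots> \<le> (\<Sum>q\<in>grid n. if residue_class (4 * CARD('n)) q = residue_class (4 * CARD('n)) p
      then bump L \<rho> (a q) (T q) else 0)" (is "_ \<le> sum ?g _")
  proof -
    have "?g p \<le> sum ?g (grid n)"
      by (rule member_le_sum[OF assms(5) _ finite_grid]) (auto intro: bump_nonneg[OF assms(1) \<rho> height T])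
    then show ?thesis
      by simp
  qed
  also have "\<dots> = class_sum F L A n x (residue_class (4 * CARD('n)) p)"
    unfolding class_sum_def a_def T_def \<rho>_def ..
  finally show ?thesis
    by (simp add: \<rho>_def)
qed

lemma cone_approx_error:
  fixes F :: "real^'n::finite \<Rightarrow> real" and L A :: real
  assumes "0 \<le> L" and "L-lipschitz_on UNIV F" and "0 < n"
    and "\<And>y. y \<in> unit_cube \<Longrightarrow> 2 * L * CARD('n) \<le> A + F y" and "x \<in> unit_cube"
  shows "\<bar>F x - cone_approx F L A n x\<bar> \<le> 2 * L * CARD('n) / n"
proof -
  let ?S = "(\<lambda>r. max 0 (class_sum F L A n x r)) ` residue_classes (4 * CARD('n))"
  obtain p where p: "p \<in> grid n" "l1_dist x (grid_point n p) \<le> CARD('n) / n"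
    using exists_grid_point_near[OF assms(3,5)] by blast
  have class_p: "residue_class (4 * CARD('n)) p \<in> residue_classes (4 * CARD('n))"
    by (simp add: residue_class_in_residue_classes)
  have "0 \<le> 2 * L * CARD('n)"
    using assms(1) by simp
  then have "0 \<le> A + F x"
    using assms(4)[OF assms(5)] by linarith
  then have "Max ?S \<le> A + F x"
    using class_sum_le[OF assms(1-4)] finite_residue_classes class_p by (subst Max_le_iff) auto
  moreover have "A + F x - 2 * L * CARD('n) / n \<le> Max ?S"
    using class_sum_ge[OF assms(1-4) p] finite_residue_classes class_p
    by (subst Max_ge_iff) force+
  ultimately show ?thesis
    by (simp add: cone_approx_def abs_le_iff)
qed

lemma cone_approx_component_error:
  fixes f :: "real^'n::finite \<Rightarrow> real^'m"
  assumes "0 \<le> L" and "L-lipschitz_on UNIV f" and "0 < n" and "x \<in> unit_cube"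
  shows "\<bar>f x $ j - cone_approx (\<lambda>x. f x $ j) L (norm (f 0) + 3 * L * CARD('n)) n x\<bar>
    \<le> 2 * L * CARD('n) / n"
proof (rule cone_approx_error[OF assms(1) lipschitz_on_component[OF assms(2)] assms(3) _ assms(4)])
  fix y :: "real^'n"
  assume "y \<in> unit_cube"
  then show "2 * L * CARD('n) \<le> norm (f 0) + 3 * L * CARD('n) + f y $ j"
    using abs_le_on_unit_cube[OF lipschitz_on_component[OF assms(2)], of y j] component_le_norm_cart[of "f 0" j]
    by simp
qed

section \<open>The cone network\<close>

definition ramp_index :: "nat \<Rightarrow> ('n::finite \<times> nat \<times> bool) set" where
  "ramp_index n = UNIV \<times> {..n} \<times> UNIV"

definition ramp :: "nat \<Rightarrow> real^'n \<Rightarrow> 'n \<times> nat \<times> bool \<Rightarrow> real" where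
  "ramp n x = (\<lambda>(i, k, s). max 0 (if s then x $ i - k / n else k / n - x $ i))"

definition ramp_layer :: "'n::finite itself \<Rightarrow> nat \<Rightarrow> layer" where
  "ramp_layer _ n = indexed_layer (set_enum (ramp_index n :: ('n \<times> nat \<times> bool) set)) basis_enum
     (\<lambda>(i, k, s) b. if b = (axis i (1::real), 0::real) then (if s then 1 else -1) else 0)
     (\<lambda>(i, k, s). if s then - (k / n) else k / n)"

definition grid_ramp :: "nat \<Rightarrow> real^'n::finite \<Rightarrow> ('n \<Rightarrow> nat) \<times> nat \<Rightarrow> real" where
  "grid_ramp n x = (\<lambda>(p, k). max 0 (l1_dist x (grid_point n p) - k * (CARD('n) / n)))"

definition distance_layer :: "'n::finite itself \<Rightarrow> nat \<Rightarrow> layer" where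
  "distance_layer _ n = indexed_layer (set_enum (grid n \<times> {..<3} :: (('n \<Rightarrow> nat) \<times> nat) set))
     (set_enum (ramp_index n :: ('n \<times> nat \<times> bool) set))
     (\<lambda>(p, k) (i, k', s). of_bool (k' = p i)) (\<lambda>(p, k). - (k * (CARD('n) / n)))"

definition class_weight ::
    "(real^'n \<Rightarrow> real) \<Rightarrow> real \<Rightarrow> real \<Rightarrow> nat \<Rightarrow> ('n::finite \<Rightarrow> nat) \<Rightarrow> ('n \<Rightarrow> nat) \<times> nat \<Rightarrow> real" where
  "class_weight F L A n r = (\<lambda>(p, k). if residue_class (4 * CARD('n)) p = r
     then bump_coeff L (CARD('n) / n) (A + F (grid_point n p)) k else 0)"

definition class_bias :: "(real^'n \<Rightarrow> real) \<Rightarrow> real \<Rightarrow> nat \<Rightarrow> ('n::finite \<Rightarrow> nat) \<Rightarrow> real" where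
  "class_bias F A n r =
     (\<Sum>p\<in>grid n. if residue_class (4 * CARD('n)) p = r then A + F (grid_point n p) else 0)"

definition class_enum :: "'n::finite itself \<Rightarrow> nat \<Rightarrow> 'n \<Rightarrow> nat" where
  "class_enum _ = set_enum (residue_classes (4 * CARD('n)))"

text \<open>The class layer initialises the running maximum: slot \<open>0\<close> receives the first class, slot
  \<open>1\<close> (\<open>None\<close>) is zero, and slot \<open>j + 2\<close> receives class \<open>j\<close>.\<close>

definition class_slot :: "'n::finite itself \<Rightarrow> nat \<Rightarrow> ('n \<Rightarrow> nat) option" where
  "class_slot T i =
     (if i = 0 then Some (class_enum T 0) else if i = 1 then None else Some (class_enum T (i - 2)))"

definition class_layer :: "(real^'n::finite \<Rightarrow> real) \<Rightarrow> real \<Rightarrow> real \<Rightarrow> nat \<Rightarrow> layer" where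
  "class_layer F L A n = indexed_layer (class_slot TYPE('n))
     (set_enum (grid n \<times> {..<3} :: (('n \<Rightarrow> nat) \<times> nat) set))
     (case_option (\<lambda>_. 0) (class_weight F L A n)) (case_option 0 (class_bias F A n))"

lemma finite_ramp_index: "finite (ramp_index n)"
  by (simp add: ramp_index_def)

lemma card_ramp_index: "card (ramp_index n :: ('n::finite \<times> nat \<times> bool) set) = 2 * CARD('n) * (n + 1)"
  by (simp add: ramp_index_def card_cartesian_product)

lemma card_grid_times: "card (grid n \<times> {..<3} :: (('n::finite \<Rightarrow> nat) \<times> nat) set) = 3 * (n + 1) ^ CARD('n)"
  by (simp add: card_cartesian_product card_grid)

lemma bij_betw_set_enum_ramp_index:
  "bij_betw (set_enum (ramp_index n)) {..<2 * CARD('n) * (n + 1)} (ramp_index n :: ('n::finite \<times> nat \<times> bool) set)"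
  unfolding card_ramp_index[symmetric] by (rule bij_betw_set_enum[OF finite_ramp_index])

lemma bij_betw_set_enum_grid_times:
  "bij_betw (set_enum (grid n \<times> {..<3})) {..<3 * (n + 1) ^ CARD('n)} (grid n \<times> {..<3} :: (('n::finite \<Rightarrow> nat) \<times> nat) set)"
  unfolding card_grid_times[symmetric] by (rule bij_betw_set_enum) (simp add: finite_grid)

lemma bij_betw_class_enum:
  "bij_betw (class_enum TYPE('n::finite)) {..<(4 * CARD('n)) ^ CARD('n)} (residue_classes (4 * CARD('n)))"
  unfolding class_enum_def card_residue_classes[symmetric] by (rule bij_betw_set_enum[OF finite_residue_classes])

lemma relu_ramp_layer:
  fixes z :: "(real^'n::finite) \<times> real"
  shows "relu (affine (CARD('n) + 1) (ramp_layer TYPE('n) n) (to_coords z)) j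
    = ramp n (fst z) (set_enum (ramp_index n) j)"
proof -
  obtain i k s where iks: "set_enum (ramp_index n :: ('n \<times> nat \<times> bool) set) j = (i, k, s)"
    by (metis prod_cases3)
  have bij: "bij_betw basis_enum {..<CARD('n) + 1} (Basis :: ((real^'n) \<times> real) set)"
    using bij_betw_basis_enum[where 'v = "(real^'n) \<times> real"] by simp
  have "affine (CARD('n) + 1) (ramp_layer TYPE('n) n) (to_coords z) j
      = (\<Sum>b\<in>Basis. (if b = (axis i 1, 0) then (if s then 1 else -1) else 0) * (z \<bullet> b))
        + (if s then - (k / n) else k / n)"
    unfolding ramp_layer_def
    by (subst affine_indexed_layer[OF bij, where v = "\<lambda>b. z \<bullet> b"])
      (simp_all add: to_coords_def iks)
  also have "(\<Sum>b\<in>Basis. (if b = (axis i 1, 0) then (if s then 1 else -1) else 0) * (z \<bullet> b))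
      = (if s then 1 else -1) * (z \<bullet> (axis i 1, 0))"
    by (simp add: if_distrib[of "\<lambda>t. t * _"] Basis_prod_def cong: if_cong)
  also have "z \<bullet> (axis i 1, 0) = fst z $ i"
    by (cases z) (simp add: inner_axis)
  finally show ?thesis
    using iks by (simp add: relu_def ramp_def)
qed

lemma l1_dist_eq_sum_ramp:
  assumes "p \<in> grid n"
  shows "l1_dist x (grid_point n p) = (\<Sum>(i, k, s)\<in>ramp_index n. of_bool (k = p i) * ramp n x (i, k, s))"
proof -
  have "(\<Sum>(i, k, s)\<in>ramp_index n. of_bool (k = p i) * ramp n x (i, k, s))
      = (\<Sum>i\<in>UNIV. \<Sum>k\<in>{..n}. \<Sum>s\<in>UNIV. of_bool (k = p i) * ramp n x (i, k, s))"
    by (simp only: ramp_index_def sum.cartesian_product' prod.case)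
  also have "\<dots> = (\<Sum>i\<in>UNIV. \<Sum>s\<in>UNIV. ramp n x (i, p i, s))"
  proof (rule sum.cong[OF refl])
    fix i
    have "p i \<in> {..n}"
      using assms by (simp add: mem_grid_iff)
    then show "(\<Sum>k\<in>{..n}. \<Sum>s\<in>UNIV. of_bool (k = p i) * ramp n x (i, k, s)) = (\<Sum>s\<in>UNIV. ramp n x (i, p i, s))"
      by (simp add: sum_distrib_left[symmetric])
  qed
  also have "\<dots> = l1_dist x (grid_point n p)"
  proof -
    have "max 0 (c - t) + max 0 (t - c) = \<bar>t - c\<bar>" for c t :: real
      by (simp add: max_def)
    then show ?thesis
      by (simp add: l1_dist_def ramp_def grid_point_def UNIV_bool)
  qed
  finally show ?thesis ..
qed

lemma relu_distance_layer:
  fixes x :: "real^'n::finite"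
  assumes "\<And>j. j < 2 * CARD('n) * (n + 1) \<Longrightarrow> u j = ramp n x (set_enum (ramp_index n) j)"
    and "j < 3 * (n + 1) ^ CARD('n)"
  shows "relu (affine (2 * CARD('n) * (n + 1)) (distance_layer TYPE('n) n) u) j
    = grid_ramp n x (set_enum (grid n \<times> {..<3}) j)"
proof -
  obtain p k where pk: "set_enum (grid n \<times> {..<3} :: (('n \<Rightarrow> nat) \<times> nat) set) j = (p, k)"
    by (metis surj_pair)
  have "(p, k) \<in> grid n \<times> {..<3}"
    using bij_betw_apply[OF bij_betw_set_enum_grid_times] assms(2) pk by (metis lessThan_iff)
  then have p: "p \<in> grid n"
    by simp
  have "affine (2 * CARD('n) * (n + 1)) (distance_layer TYPE('n) n) u j
      = (\<Sum>(i, k', s)\<in>ramp_index n. of_bool (k' = p i) * ramp n x (i, k', s)) - k * (CARD('n) / n)"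
    unfolding distance_layer_def
    by (subst affine_indexed_layer[OF bij_betw_set_enum_ramp_index, where v = "ramp n x"])
      (simp_all add: assms(1) pk split_def)
  then show ?thesis
    using pk by (simp add: relu_def grid_ramp_def l1_dist_eq_sum_ramp[OF p])
qed

lemma class_sum_eq:
  fixes F :: "real^'n::finite \<Rightarrow> real"
  shows "class_sum F L A n x r
    = (\<Sum>s\<in>grid n \<times> {..<3}. class_weight F L A n r s * grid_ramp n x s) + class_bias F A n r"
proof -
  have "(if residue_class (4 * CARD('n)) p = r
        then bump L (CARD('n) / n) (A + F (grid_point n p)) (l1_dist x (grid_point n p)) else 0)
      = (\<Sum>k<3. class_weight F L A n r (p, k) * grid_ramp n x (p, k))
        + (if residue_class (4 * CARD('n)) p = r then A + F (grid_point n p) else 0)" for p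
    by (cases "residue_class (4 * CARD('n)) p = r") (simp_all add: bump_def class_weight_def grid_ramp_def)
  then show ?thesis
    by (simp add: class_sum_def class_bias_def sum.cartesian_product sum.distrib)
qed

lemma relu_class_layer:
  fixes F :: "real^'n::finite \<Rightarrow> real"
  assumes "\<And>j. j < 3 * (n + 1) ^ CARD('n) \<Longrightarrow> u j = grid_ramp n x (set_enum (grid n \<times> {..<3}) j)"
  shows "relu (affine (3 * (n + 1) ^ CARD('n)) (class_layer F L A n) u) i
    = (case class_slot TYPE('n) i of None \<Rightarrow> 0 | Some r \<Rightarrow> max 0 (class_sum F L A n x r))"
proof (cases "class_slot TYPE('n) i")
  case None
  then show ?thesis
    by (simp add: class_layer_def relu_def affine_def indexed_layer_def)
next
  case (Some r)
  have "affine (3 * (n + 1) ^ CARD('n)) (class_layer F L A n) u i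
      = (\<Sum>s\<in>grid n \<times> {..<3}. class_weight F L A n r s * grid_ramp n x s) + class_bias F A n r"
    unfolding class_layer_def
    by (subst affine_indexed_layer[OF bij_betw_set_enum_grid_times, where v = "grid_ramp n x"])
      (simp_all add: assms Some)
  then show ?thesis
    using Some by (simp only: relu_def class_sum_eq option.case)
qed

text \<open>The layers compute the ramps \<open>max 0 (\<pm>(x\<^sub>i - k/n))\<close>, then the ReLUs at \<open>0, \<rho>, 2\<rho>\<close> of the
  \<open>\<ell>\<^sub>1\<close>-distances to the grid points, then the class sums, then the running maximum over the
  \<open>(4 d)\<^sup>d\<close> classes, which is finally written into the last coordinate.\<close>

definition cone_dims :: "'n::finite itself \<Rightarrow> nat \<Rightarrow> nat list" where
  "cone_dims _ n = (let N = (4 * CARD('n)) ^ CARD('n) in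
     [CARD('n) + 1, 2 * CARD('n) * (n + 1), 3 * (n + 1) ^ CARD('n)] @ replicate N (N + 2) @ [CARD('n) + 1])"

definition cone_layers :: "(real^'n::finite \<Rightarrow> real) \<Rightarrow> real \<Rightarrow> real \<Rightarrow> nat \<Rightarrow> layer list" where
  "cone_layers F L A n =
     [ramp_layer TYPE('n) n, distance_layer TYPE('n) n, class_layer F L A n]
     @ map max_layer [1..<(4 * CARD('n)) ^ CARD('n)] @ [readout_layer (0 :: real^'n, 1 :: real) A]"

lemma Max_image_class_enum:
  "Max ((\<lambda>j. g (class_enum TYPE('n::finite) j)) ` {..(4 * CARD('n)) ^ CARD('n) - 1})
    = Max (g ` residue_classes (4 * CARD('n)))"
proof -
  have "{..P - 1} = {..<P}" if "0 < P" for P :: nat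
    using that by auto
  then have "{..(4 * CARD('n)) ^ CARD('n) - 1} = {..<(4 * CARD('n)) ^ CARD('n)}"
    by simp
  moreover have "g ` residue_classes (4 * CARD('n)) = g ` class_enum TYPE('n) ` {..<(4 * CARD('n)) ^ CARD('n)}"
    using bij_betw_imp_surj_on[OF bij_betw_class_enum[where 'n = 'n]] by simp
  ultimately show ?thesis
    by (simp add: image_image)
qed

lemma running_max_hidden_cone_layers:
  fixes F :: "real^'n::finite \<Rightarrow> real" and z :: "(real^'n) \<times> real"
  shows "running_max ((4 * CARD('n)) ^ CARD('n)) (\<lambda>j. max 0 (class_sum F L A n (fst z) (class_enum TYPE('n) j))) 0
    (relu (affine (3 * (n + 1) ^ CARD('n)) (class_layer F L A n)
      (relu (affine (2 * CARD('n) * (n + 1)) (distance_layer TYPE('n) n)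
        (relu (affine (CARD('n) + 1) (ramp_layer TYPE('n) n) (to_coords z)))))))"
proof -
  have "relu (affine (3 * (n + 1) ^ CARD('n)) (class_layer F L A n)
      (relu (affine (2 * CARD('n) * (n + 1)) (distance_layer TYPE('n) n)
        (relu (affine (CARD('n) + 1) (ramp_layer TYPE('n) n) (to_coords z)))))) i
    = (case class_slot TYPE('n) i of None \<Rightarrow> 0 | Some r \<Rightarrow> max 0 (class_sum F L A n (fst z) r))" for i
    by (intro relu_class_layer relu_distance_layer relu_ramp_layer)
  then show ?thesis
    by (simp add: running_max_def class_slot_def)
qed

lemma mlp_fun_cone_layers:
  fixes F :: "real^'n::finite \<Rightarrow> real"
  shows "mlp_fun (cone_dims TYPE('n) n) (cone_layers F L A n) = (\<lambda>z. (0, cone_approx F L A n (fst z)))"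
proof (rule ext)
  fix z :: "(real^'n) \<times> real"
  define N where "N = (4 * CARD('n)) ^ CARD('n)"
  define S where "S j = max 0 (class_sum F L A n (fst z) (class_enum TYPE('n) j))" for j
  define u where "u = relu (affine (3 * (n + 1) ^ CARD('n)) (class_layer F L A n)
    (relu (affine (2 * CARD('n) * (n + 1)) (distance_layer TYPE('n) n)
      (relu (affine (CARD('n) + 1) (ramp_layer TYPE('n) n) (to_coords z))))))"
  have "0 < N"
    by (simp add: N_def)
  have "running_max N S 0 u"
    unfolding u_def S_def N_def by (rule running_max_hidden_cone_layers)
  then obtain w where w: "running_max N S (N - 1) w"
    and eval: "mlp_eval (replicate (N - 1 + 1) (N + 2) @ [CARD('n) + 1])
      (map max_layer [0 + 1..<N] @ [readout_layer (0 :: real^'n, 1 :: real) A]) u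
      = affine (N + 2) (readout_layer (0 :: real^'n, 1 :: real) A) w"
    using mlp_eval_max_layers[of N S 0 u "N - 1", where M = "CARD('n) + 1"
        and Lay = "readout_layer (0 :: real^'n, 1 :: real) A"] \<open>0 < N\<close>
    by (auto simp: S_def)
  have "mlp_eval (cone_dims TYPE('n) n) (cone_layers F L A n) (to_coords z)
      = affine (N + 2) (readout_layer (0 :: real^'n, 1 :: real) A) w"
    unfolding cone_dims_def cone_layers_def Let_def N_def[symmetric]
    using eval \<open>0 < N\<close> by (simp add: u_def mlp_eval_Cons)
  also have "\<dots> = (\<lambda>i. if basis_enum i = (0 :: real^'n, 1 :: real) then Max (S ` {..N - 1}) - A else 0)"
    using w by (auto simp: affine_readout_layer running_max_def)
  also have "Max (S ` {..N - 1}) = Max ((\<lambda>r. max 0 (class_sum F L A n (fst z) r)) ` residue_classes (4 * CARD('n)))"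
    unfolding S_def N_def by (rule Max_image_class_enum[of "\<lambda>r. max 0 (class_sum F L A n (fst z) r)"])
  finally have eval: "mlp_eval (cone_dims TYPE('n) n) (cone_layers F L A n) (to_coords z)
      = (\<lambda>i. if basis_enum i = (0 :: real^'n, 1 :: real) then cone_approx F L A n (fst z) else 0)"
    unfolding cone_approx_def .
  have "(0 :: real^'n, 1 :: real) \<in> Basis"
    by (simp add: Basis_prod_def)
  then show "mlp_fun (cone_dims TYPE('n) n) (cone_layers F L A n) z = (0, cone_approx F L A n (fst z))"
    unfolding mlp_fun_def eval from_coords_basis_enum_eq[OF \<open>(0, 1) \<in> Basis\<close>] by simp
qed

lemma flow_cone_layers:
  fixes F :: "real^'n::finite \<Rightarrow> real"
  shows "proj_last (flow (mlp_fun (cone_dims TYPE('n) n) (cone_layers F L A n)) (iota x)) = cone_approx F L A n x"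
  by (simp add: mlp_fun_cone_layers flow_vertical_field iota_def proj_last_def)

lemma relu_mlp_arch_cone:
  fixes F :: "real^'n::finite \<Rightarrow> real"
  shows "relu_mlp_arch TYPE((real^'n) \<times> real) (cone_dims TYPE('n) n) (cone_layers F L A n)"
  by (simp add: relu_mlp_arch_def cone_dims_def cone_layers_def Let_def)

lemma cone_approx_lipschitz:
  fixes F :: "real^'n::finite \<Rightarrow> real"
  shows "\<exists>K. K-lipschitz_on UNIV (cone_approx F L A n)"
proof -
  obtain K where K: "K-lipschitz_on UNIV
      (mlp_fun (cone_dims TYPE('n) n) (cone_layers F L A n) :: (real^'n) \<times> real \<Rightarrow> _)"
    using mlp_fun_lipschitz[OF relu_mlp_arch_cone[where F = F and L = L and A = A and n = n]] by blast
  have "K-lipschitz_on UNIV (cone_approx F L A n)"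
  proof (rule lipschitz_onI)
    fix x y :: "real^'n"
    have "dist (cone_approx F L A n x) (cone_approx F L A n y)
        \<le> dist (mlp_fun (cone_dims TYPE('n) n) (cone_layers F L A n) (x, 0::real))
            (mlp_fun (cone_dims TYPE('n) n) (cone_layers F L A n) (y, 0::real))"
      by (simp add: mlp_fun_cone_layers dist_Pair_Pair)
    also have "\<dots> \<le> K * dist x y"
      using lipschitz_onD[OF K UNIV_I UNIV_I, of "(x, 0)" "(y, 0)"] by (simp add: dist_Pair_Pair)
    finally show "dist (cone_approx F L A n x) (cone_approx F L A n y) \<le> K * dist x y" .
  qed (rule lipschitz_on_nonneg[OF K])
  then show ?thesis ..
qed

section \<open>Size of the cone network\<close>

lemma of_nat_mult_Suc_power_le:
  assumes "1 \<le> n" and "1 \<le> c"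
  shows "real (M * (n + 1) ^ k) \<le> real M * 2 ^ k * c * real n ^ k"
proof -
  have "real ((n + 1) ^ k) \<le> 2 ^ k * real n ^ k"
    using power_mono[of "real n + 1" "2 * real n" k] assms(1) by (simp add: power_mult_distrib add.commute)
  then have "real (M * (n + 1) ^ k) \<le> real M * 2 ^ k * real n ^ k"
    by (simp add: mult_left_mono mult.assoc)
  also have "\<dots> \<le> real M * 2 ^ k * c * real n ^ k"
    using mult_left_mono[OF assms(2), of "real M * 2 ^ k * real n ^ k"] by (simp add: mult_ac)
  finally show ?thesis .
qed

lemma length_cone_layers:
  fixes F :: "real^'n::finite \<Rightarrow> real"
  shows "length (cone_layers F L A n) = (4 * CARD('n::finite)) ^ CARD('n) + 3"
  by (simp add: cone_layers_def)

lemma length_cone_dims: "length (cone_dims TYPE('n::finite) n) = (4 * CARD('n)) ^ CARD('n) + 4"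
  by (simp add: cone_dims_def Let_def)

lemma nth_cone_dims:
  assumes "l < (4 * CARD('n::finite)) ^ CARD('n) + 4"
  shows "cone_dims TYPE('n) n ! l =
    (if l = 0 then CARD('n) + 1 else if l = 1 then 2 * CARD('n) * (n + 1)
     else if l = 2 then 3 * (n + 1) ^ CARD('n)
     else if l < (4 * CARD('n)) ^ CARD('n) + 3 then (4 * CARD('n)) ^ CARD('n) + 2 else CARD('n) + 1)"
  using assms by (auto simp: cone_dims_def Let_def nth_append nth_Cons')

lemma
  fixes n :: nat
  defines "N \<equiv> (4 * CARD('n::finite)) ^ CARD('n)" and "K \<equiv> (4 * CARD('n)) ^ CARD('n) + 2 * CARD('n) + 3"
  shows cone_dims_le: "l < N + 4 \<Longrightarrow> cone_dims TYPE('n) n ! l + 1 \<le> K * (n + 1) ^ CARD('n)"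
    and cone_dims_adjacent_le: "l < N + 3 \<Longrightarrow>
      cone_dims TYPE('n) n ! (l + 1) \<le> K * (n + 1) \<or> cone_dims TYPE('n) n ! l + 1 \<le> K * (n + 1)"
proof -
  define P where "P = n + 1"
  define X where "X = P ^ CARD('n)"
  have P: "1 \<le> P" "P \<le> X"
    by (simp_all add: P_def X_def self_le_power)
  have "0 < CARD('n)"
    by simp
  then have K: "CARD('n) + 2 \<le> K" "2 * CARD('n) + 1 \<le> K" "N + 3 \<le> K" "4 \<le> K"
    unfolding K_def N_def by linarith+
  define KP where "KP = K * P"
  define KX where "KX = K * X"
  have "2 * CARD('n) * P + 1 \<le> KP" "K \<le> KP"
    using mult_le_mono1[OF K(2), of P] P(1) by (simp_all add: KP_def algebra_simps)
  moreover have "(2 * CARD('n) + 1) * P = 2 * CARD('n) * P + P"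
    by (simp add: algebra_simps)
  then have "2 * CARD('n) * P + 1 \<le> KX" "3 * X + 1 \<le> KX"
    using mult_le_mono[OF K(2) P(2)] mult_le_mono1[OF K(4), of X] P unfolding KX_def by linarith+
  moreover have "K \<le> KX"
    using P unfolding KX_def by simp
  ultimately have bounds: "2 * CARD('n) * P + 1 \<le> KP" "K \<le> KP" "2 * CARD('n) * P + 1 \<le> KX"
      "3 * X + 1 \<le> KX" "K \<le> KX"
    by simp_all
  have "cone_dims TYPE('n) n ! l + 1 \<le> KX" if "l < N + 4" for l
    using nth_cone_dims[where 'n = 'n, of l n] that K bounds
    unfolding N_def[symmetric] P_def[symmetric] X_def[symmetric] by auto
  then show "cone_dims TYPE('n) n ! l + 1 \<le> K * (n + 1) ^ CARD('n)" if "l < N + 4"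
    using that by (simp add: KX_def X_def P_def)
  have "cone_dims TYPE('n) n ! (l + 1) \<le> KP \<or> cone_dims TYPE('n) n ! l + 1 \<le> KP" if "l < N + 3" for l
    using nth_cone_dims[where 'n = 'n, of l n] nth_cone_dims[where 'n = 'n, of "l + 1" n] that K bounds
    unfolding N_def[symmetric] P_def[symmetric] by auto
  then show "cone_dims TYPE('n) n ! (l + 1) \<le> K * (n + 1) \<or> cone_dims TYPE('n) n ! l + 1 \<le> K * (n + 1)"
    if "l < N + 3"
    using that by (simp add: KP_def P_def)
qed

lemma mlp_width_cone_dims_le:
  "mlp_width (cone_dims TYPE('n::finite) n)
    \<le> ((4 * CARD('n)) ^ CARD('n) + 2 * CARD('n) + 3) * (n + 1) ^ (CARD('n) + 1)"
proof -
  define K where "K = (4 * CARD('n)) ^ CARD('n) + 2 * CARD('n) + 3"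
  have "x \<le> K * (n + 1) ^ (CARD('n) + 1)" if "x \<in> set (cone_dims TYPE('n) n)" for x
  proof -
    have "x \<le> K * (n + 1) ^ CARD('n)"
      using that cone_dims_le[where 'n = 'n, of _ n] by (fastforce simp: in_set_conv_nth length_cone_dims K_def)
    also have "\<dots> \<le> K * (n + 1) ^ (CARD('n) + 1)"
      by (intro mult_le_mono2 power_increasing) simp_all
    finally show ?thesis .
  qed
  then show ?thesis
    unfolding mlp_width_def K_def[symmetric] by (intro Max.boundedI) (simp_all add: cone_dims_def Let_def)
qed

lemma mlp_nnz_cone_le:
  fixes F :: "real^'n::finite \<Rightarrow> real"
  shows "mlp_nnz (cone_dims TYPE('n) n) (cone_layers F L A n)
    \<le> ((4 * CARD('n)) ^ CARD('n) + 3) * ((4 * CARD('n)) ^ CARD('n) + 2 * CARD('n) + 3)\<^sup>2 * (n + 1) ^ (CARD('n) + 1)"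
proof -
  define N where "N = (4 * CARD('n)) ^ CARD('n)"
  define K where "K = N + 2 * CARD('n) + 3"
  define KP where "KP = K * (n + 1)"
  define KX where "KX = K * (n + 1) ^ CARD('n)"
  have layer: "cone_dims TYPE('n) n ! (l + 1) * (cone_dims TYPE('n) n ! l + 1) \<le> KP * KX" if "l < N + 3" for l
  proof -
    have a: "cone_dims TYPE('n) n ! l + 1 \<le> KX" and b: "cone_dims TYPE('n) n ! (l + 1) \<le> KX"
      using cone_dims_le[where 'n = 'n, of l n] cone_dims_le[where 'n = 'n, of "l + 1" n] that
      unfolding N_def[symmetric] K_def[symmetric] KX_def[symmetric] by simp_all
    from cone_dims_adjacent_le[where 'n = 'n, of l n] that
    consider "cone_dims TYPE('n) n ! (l + 1) \<le> KP" | "cone_dims TYPE('n) n ! l + 1 \<le> KP"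
      unfolding N_def[symmetric] K_def[symmetric] KP_def[symmetric] by blast
    then show ?thesis
    proof cases
      case 1
      then show ?thesis
        using a by (rule mult_le_mono)
    next
      case 2
      then show ?thesis
        using mult_le_mono[OF b 2] by (simp only: mult.commute[of KP])
    qed
  qed
  have "mlp_nnz (cone_dims TYPE('n) n) (cone_layers F L A n)
      \<le> (\<Sum>l<N + 3. cone_dims TYPE('n) n ! (l + 1) * (cone_dims TYPE('n) n ! l + 1))"
    using mlp_nnz_le[of "cone_dims TYPE('n) n" "cone_layers F L A n"] unfolding length_cone_layers N_def .
  also have "\<dots> \<le> (\<Sum>l<N + 3. KP * KX)"
    using layer by (intro sum_mono) simp
  also have "\<dots> = (N + 3) * K\<^sup>2 * (n + 1) ^ (CARD('n) + 1)"
    by (simp add: KP_def KX_def power2_eq_square algebra_simps)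
  finally show ?thesis
    unfolding N_def K_def .
qed

lemma
  fixes F :: "real^'n::finite \<Rightarrow> real"
  defines "N \<equiv> (4 * CARD('n)) ^ CARD('n)" and "K \<equiv> (4 * CARD('n)) ^ CARD('n) + 2 * CARD('n) + 3"
  assumes "0 < n"
  shows cone_width_le: "real (mlp_width (cone_dims TYPE('n) n))
      \<le> real K * 2 ^ (CARD('n) + 1) * real CARD('n) * real n ^ (CARD('n) + 1)"
    and cone_depth_le: "real (mlp_depth (cone_layers F L A n)) \<le> real (N + 3) * (1 + log 2 (real CARD('n)))"
    and cone_nnz_le: "real (mlp_nnz (cone_dims TYPE('n) n) (cone_layers F L A n))
      \<le> real ((N + 3) * K\<^sup>2) * 2 ^ (CARD('n) + 1) * real CARD('n) * real n ^ (CARD('n) + 1)"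
proof -
  have n: "1 \<le> n" "1 \<le> real CARD('n)"
    using assms(3) by (simp_all add: Suc_le_eq)
  show "real (mlp_width (cone_dims TYPE('n) n))
      \<le> real K * 2 ^ (CARD('n) + 1) * real CARD('n) * real n ^ (CARD('n) + 1)"
    using order_trans[OF of_nat_mono[OF mlp_width_cone_dims_le] of_nat_mult_Suc_power_le[OF n]]
    unfolding K_def .
  show "real (mlp_nnz (cone_dims TYPE('n) n) (cone_layers F L A n))
      \<le> real ((N + 3) * K\<^sup>2) * 2 ^ (CARD('n) + 1) * real CARD('n) * real n ^ (CARD('n) + 1)"
    using order_trans[OF of_nat_mono[OF mlp_nnz_cone_le] of_nat_mult_Suc_power_le[OF n]]
    unfolding N_def K_def .
  have "real (N + 3) * 1 \<le> real (N + 3) * (1 + log 2 (real CARD('n)))"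
    by (intro mult_left_mono) simp_all
  then show "real (mlp_depth (cone_layers F L A n)) \<le> real (N + 3) * (1 + log 2 (real CARD('n)))"
    by (simp only: mlp_depth_def length_cone_layers N_def mult_1_right)
qed

theorem corollary12:
  fixes f :: "real^'n \<Rightarrow> real^'m" and L :: real
  assumes "L \<ge> 0" and "L-lipschitz_on UNIV f"
  shows "\<exists>C>0. \<exists>cw cd cp. \<forall>n::nat. n > 0 \<longrightarrow>
    (\<exists>\<Phi> :: 'm \<Rightarrow> ((real^'n) \<times> real \<Rightarrow> (real^'n) \<times> real).
      (\<forall>i. \<exists>dims layers. relu_mlp_arch TYPE((real^'n) \<times> real) dims layers
           \<and> \<Phi> i = mlp_fun dims layers
           \<and> real (mlp_width dims) \<le> cw * real CARD('n) * real n ^ (CARD('n) + 1)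
           \<and> real (mlp_depth layers) \<le> cd * (1 + log 2 (real CARD('n)))
           \<and> real (mlp_nnz dims layers) \<le> cp * real CARD('n) * real n ^ (CARD('n) + 1))
      \<and> (let \<Psi> = (\<lambda>x. \<chi> i. proj_last (flow (\<Phi> i) (iota x)))
         in (\<forall>j. \<forall>x\<in>unit_cube. \<bar>f x $ j - \<Psi> x $ j\<bar> \<le> C / real n)
            \<and> (\<exists>K. K-lipschitz_on UNIV \<Psi>)))"
proof -
  define N where "N = (4 * CARD('n)) ^ CARD('n)"
  define K where "K = N + 2 * CARD('n) + 3"
  define A where "A = norm (f 0) + 3 * L * CARD('n)"
  have error: "\<bar>f x $ j - cone_approx (\<lambda>x. f x $ j) L A n x\<bar> \<le> (2 * L * CARD('n) + 1) / n"
    if "0 < n" and "x \<in> unit_cube" for n x j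
  proof -
    have "2 * L * CARD('n) / n \<le> (2 * L * CARD('n) + 1) / n"
      by (simp add: divide_right_mono)
    then show ?thesis
      using cone_approx_component_error[OF assms that, of j] unfolding A_def by linarith
  qed
  have C: "0 < 2 * L * CARD('n) + 1"
    using assms(1) by (intro add_nonneg_pos) simp_all
  show ?thesis
  proof (rule exI[of _ "2 * L * CARD('n) + 1"], rule conjI[OF C], rule exI[of _ "real K * 2 ^ (CARD('n) + 1)"],
      rule exI[of _ "real (N + 3)"], rule exI[of _ "real ((N + 3) * K\<^sup>2) * 2 ^ (CARD('n) + 1)"],
      intro allI impI, goal_cases)
    case (1 n)
    show ?case
    proof (intro exI[of _ "\<lambda>i. mlp_fun (cone_dims TYPE('n) n) (cone_layers (\<lambda>x. f x $ i) L A n)"] conjI allI,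
        goal_cases)
      case (1 i)
      show ?case
        unfolding K_def N_def
        by (intro exI[of _ "cone_dims TYPE('n) n"] exI[of _ "cone_layers (\<lambda>x. f x $ i) L A n"] conjI
            relu_mlp_arch_cone refl cone_width_le cone_depth_le cone_nnz_le \<open>0 < n\<close>)
    next
      case 2
      show ?case
        unfolding Let_def flow_cone_layers
        using error[OF \<open>0 < n\<close>]
          lipschitz_on_vec[where g = "\<lambda>i. cone_approx (\<lambda>x. f x $ i) L A n", OF cone_approx_lipschitz]
        by simp
    qed
  qed
qed

end
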